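(* Let $p$ be prime, $G=\mathbb{Z}_{p^2}\times\mathbb{Z}_p$, and $A\subset G$ with $\#A=p$ and $\mathcal{Z}_A\neq\emptyset$. Then $A$ is a tile of $G$ and also a spectral set.
   Context: For $b=(b_1,b_2)\in G$ let $\chi_b(a_1,a_2)=e^{2\pi i(a_1b_1/p^2+a_2b_2/p)}$, $\widehat{1}_A(b)=\sum_{a\in A}\overline{\chi_b(a)}$, and $\mathcal{Z}_A=\{b\in G:\widehat{1}_A(b)=0\}$. $A$ is a spectral set if there is $B\subset G$ with $\{\chi_b|_A:b\in B\}$ an orthogonal basis of $L^2(A)$ (counting measure). $A$ is a tile if there is $T\subset G$ with $A\oplus T=G$ (every element of $G$ uniquely $a+t$, $a\in A,t\in T$). *)

theory Defs
  imports "HOL-Analysis.Analysis"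
begin

definition Gset :: "nat \<Rightarrow> (nat \<times> nat) set" where
  "Gset p = {0..<p^2} \<times> {0..<p}"

definition addG :: "nat \<Rightarrow> nat \<times> nat \<Rightarrow> nat \<times> nat \<Rightarrow> nat \<times> nat" where
  "addG p x y = ((fst x + fst y) mod p^2, (snd x + snd y) mod p)"

definition chi :: "nat \<Rightarrow> nat \<times> nat \<Rightarrow> nat \<times> nat \<Rightarrow> complex" where
  "chi p b a = exp (2 * of_real pi * \<i> *
      of_real (real (fst a) * real (fst b) / real (p^2) + real (snd a) * real (snd b) / real p))"

definition hat1 :: "nat \<Rightarrow> (nat \<times> nat) set \<Rightarrow> nat \<times> nat \<Rightarrow> complex" where
  "hat1 p A b = (\<Sum>a\<in>A. cnj (chi p b a))"

definition zeroset :: "nat \<Rightarrow> (nat \<times> nat) set \<Rightarrow> (nat \<times> nat) set" where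
  "zeroset p A = {b \<in> Gset p. hat1 p A b = 0}"

text \<open>A is spectral: some B \<subseteq> G such that the restricted characters chi_b|_A, b \<in> B,
  form an orthogonal basis of L^2(A) (counting measure): pairwise orthogonal and spanning.\<close>
definition spectral :: "nat \<Rightarrow> (nat \<times> nat) set \<Rightarrow> bool" where
  "spectral p A \<longleftrightarrow> (\<exists>B \<subseteq> Gset p.
     (\<forall>b\<in>B. \<forall>b'\<in>B. b \<noteq> b' \<longrightarrow> (\<Sum>a\<in>A. chi p b a * cnj (chi p b' a)) = 0) \<and>
     (\<forall>f :: nat \<times> nat \<Rightarrow> complex. \<exists>c :: nat \<times> nat \<Rightarrow> complex.
        \<forall>a\<in>A. f a = (\<Sum>b\<in>B. c b * chi p b a)))"

definition tile :: "nat \<Rightarrow> (nat \<times> nat) set \<Rightarrow> bool" where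
  "tile p A \<longleftrightarrow> (\<exists>T \<subseteq> Gset p. \<forall>g\<in>Gset p.
     \<exists>!x. x \<in> A \<times> T \<and> addG p (fst x) (snd x) = g)"

end

theory Submission
  imports Defs "HOL-Computational_Algebra.Polynomial_Factorial" "HOL-Number_Theory.Cong"
begin

text \<open>
  Pick b with sum over A of chi_b equal to 0 and write chi_b(a) = zeta^e(a), where zeta is a
  primitive p^2-th root of unity and e(a) < p^2. The integer polynomial P = sum over A of X^e(a)
  vanishes at zeta, so it is divisible by the cyclotomic polynomial Phi(X) = sum_{t<p} X^(p t),
  which is irreducible by Eisenstein's criterion applied to Phi(X + 1). Because P has p terms,
  the quotient P / Phi has nonnegative coefficients summing to 1, so it is a monomial X^s: the
  exponents e(a) run exactly once through the coset s + p Z / p^2 Z. Consequently A tiles G with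
  the set T of all t with e(t) < p, and the characters chi_(k b), k < p, restricted to A form a
  rescaled discrete Fourier matrix, hence an orthogonal basis of L^2(A).
\<close>

lemma prime_dvd_binomial_power:
  fixes Y :: "int poly"
  assumes "prime p"
  shows "[:int p:] dvd (Y + 1) ^ p - (Y ^ p + 1)"
proof -
  have p: "p > 1" using assms prime_gt_1_nat by blast
  have "(Y + 1) ^ p = (\<Sum>k\<le>p. of_nat (p choose k) * Y ^ k)"
    by (simp add: binomial_ring)
  also have "{..p} = insert 0 (insert p {1..<p})" using p by auto
  also have "(\<Sum>k\<in>insert 0 (insert p {1..<p}). of_nat (p choose k) * Y ^ k)
      = 1 + (Y ^ p + (\<Sum>k\<in>{1..<p}. of_nat (p choose k) * Y ^ k))"
    using p by (subst sum.insert; auto)+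
  finally have "(Y + 1) ^ p - (Y ^ p + 1) = (\<Sum>k\<in>{1..<p}. of_nat (p choose k) * Y ^ k)"
    by simp
  moreover have "[:int p:] dvd of_nat (p choose k) * Y ^ k" if "k \<in> {1..<p}" for k
  proof -
    have "p dvd p choose k" using that assms by (intro dvd_choose_prime) auto
    then have "[:int p:] dvd [:int (p choose k):]" by simp
    then show ?thesis unfolding of_nat_poly by (rule dvd_mult2)
  qed
  ultimately show ?thesis by (auto intro!: dvd_sum)
qed

lemma const_poly_dvd_monom_mult_cancel:
  fixes c :: "'a::{comm_semiring_1,semiring_no_zero_divisors}"
  assumes "[:c:] dvd monom 1 n * h"
  shows "[:c:] dvd h"
  unfolding const_poly_dvd_iff
proof
  fix k
  have "coeff (monom 1 n * h) (n + k) = coeff h k" by (simp add: coeff_monom_mult)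
  then show "c dvd coeff h k" using assms by (metis const_poly_dvd_iff)
qed

lemma eisenstein_cofactor_degree_0:
  fixes p :: int and F A B :: "int poly"
  assumes p: "prime p" and F: "F = A * B" "lead_coeff F = 1"
    and low: "\<And>k. k < degree F \<Longrightarrow> p dvd coeff F k"
    and A0: "p dvd coeff A 0" and B0: "\<not> p dvd coeff B 0"
  shows "degree B = 0"
proof -
  have "A \<noteq> 0" "B \<noteq> 0" using F by auto
  have "lead_coeff A * lead_coeff B = 1" using F by (simp add: lead_coeff_mult)
  then have "\<not> p dvd lead_coeff A"
    using p by (metis dvd_mult2 not_prime_unit)
  then have ex: "\<exists>k. \<not> p dvd coeff A k" by blast
  define k where "k = (LEAST k. \<not> p dvd coeff A k)"
  have k: "\<not> p dvd coeff A k" unfolding k_def by (rule LeastI_ex[OF ex])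
  have below_k: "p dvd coeff A i" if "i < k" for i
    using that not_less_Least unfolding k_def by blast
  have "k \<le> degree A" using k by (metis dvd_0_right le_degree)
  \<comment> \<open>the lowest coefficient of A not divisible by p survives in F\<close>
  have "coeff F k = coeff A k * coeff B 0 + (\<Sum>i<k. coeff A i * coeff B (k - i))"
    using F(1) by (simp add: coeff_mult lessThan_Suc_atMost[symmetric])
  moreover have "p dvd (\<Sum>i<k. coeff A i * coeff B (k - i))"
    by (auto intro!: dvd_sum simp: below_k)
  moreover have "\<not> p dvd coeff A k * coeff B 0"
    using k B0 p by (simp add: prime_dvd_mult_iff)
  ultimately have "\<not> p dvd coeff F k" by (simp add: dvd_add_left_iff)
  then have "degree F \<le> k" using low not_le by blast
  moreover have "degree F = degree A + degree B"
    using F(1) \<open>A \<noteq> 0\<close> \<open>B \<noteq> 0\<close> by (simp add: degree_mult_eq)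
  ultimately show ?thesis using \<open>k \<le> degree A\<close> by linarith
qed

lemma monic_factor_degree_0_unit:
  fixes A B :: "'a::idom poly"
  assumes "lead_coeff (A * B) = 1" "degree B = 0"
  shows "B dvd 1"
proof -
  have "lead_coeff A * lead_coeff B = 1" using assms(1) by (simp add: lead_coeff_mult)
  then have "lead_coeff B dvd 1" by (metis dvd_triv_right)
  moreover have "B = [:lead_coeff B:]" using assms(2) by (metis degree_0_id)
  ultimately show ?thesis by (metis is_unit_poly_iff)
qed

lemma eisenstein_irreducible:
  fixes p :: int and F :: "int poly"
  assumes p: "prime p" and monic: "lead_coeff F = 1" and deg: "degree F > 0"
    and low: "\<And>k. k < degree F \<Longrightarrow> p dvd coeff F k"
    and const: "\<not> p ^ 2 dvd coeff F 0"
  shows "irreducible F"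
proof (rule irreducibleI)
  show "F \<noteq> 0" and "\<not> F dvd 1" using deg by (auto simp: is_unit_poly_iff)
next
  fix A B assume F: "F = A * B"
  have F0: "coeff F 0 = coeff A 0 * coeff B 0" using F by (simp add: coeff_mult)
  then have "p dvd coeff A 0 \<or> p dvd coeff B 0"
    using low[of 0] deg p by (simp add: prime_dvd_mult_iff)
  moreover have "\<not> (p dvd coeff A 0 \<and> p dvd coeff B 0)"
    using const F0 by (auto simp: power2_eq_square mult_dvd_mono)
  ultimately consider "p dvd coeff A 0" "\<not> p dvd coeff B 0" | "p dvd coeff B 0" "\<not> p dvd coeff A 0"
    by blast
  then show "A dvd 1 \<or> B dvd 1"
  proof cases
    case 1
    then have "degree B = 0" using eisenstein_cofactor_degree_0[OF p F monic low] by blast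
    then show ?thesis using monic F monic_factor_degree_0_unit by blast
  next
    case 2
    have "F = B * A" using F by (simp add: mult.commute)
    then have "degree A = 0" using eisenstein_cofactor_degree_0[OF p _ monic low] 2 by blast
    then show ?thesis using monic \<open>F = B * A\<close> monic_factor_degree_0_unit by blast
  qed
qed

lemma dvd_power_diff:
  fixes a b c :: "'a::comm_ring_1"
  assumes "c dvd a - b"
  shows "c dvd a ^ n - b ^ n"
  using assms by (simp add: power_diff_sumr2)

text \<open>For prime \<open>p\<close> this is the \<open>p\<^sup>2\<close>-th cyclotomic polynomial \<open>\<Phi>\<^sub>p(X\<^sup>p)\<close>.\<close>

definition cyclotomic_sq :: "nat \<Rightarrow> int poly" where
  "cyclotomic_sq p = (\<Sum>t<p. monom 1 (p * t))"

lemma coeff_cyclotomic_sq: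
  assumes "p > 0"
  shows "coeff (cyclotomic_sq p) k = (if p dvd k \<and> k < p * p then 1 else 0)"
proof -
  have "coeff (cyclotomic_sq p) k = (\<Sum>t<p. if p * t = k then 1 else 0)"
    by (simp add: cyclotomic_sq_def coeff_sum coeff_monom)
  also have "\<dots> = (if p dvd k \<and> k < p * p then 1 else 0)"
  proof (cases "p dvd k")
    case True
    then obtain m where "k = p * m" by blast
    then show ?thesis using assms by (simp add: sum.delta)
  qed (auto intro!: sum.neutral)
  finally show ?thesis .
qed

lemma degree_cyclotomic_sq:
  assumes "p > 0"
  shows "degree (cyclotomic_sq p) = p * (p - 1)"
proof (rule antisym)
  show "degree (cyclotomic_sq p) \<le> p * (p - 1)"
  proof (rule degree_le, intro allI impI)
    fix i assume "p * (p - 1) < i"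
    moreover have "i \<le> p * (p - 1)" if "p dvd i" "i < p * p"
    proof -
      obtain m where m: "i = p * m" using \<open>p dvd i\<close> by blast
      then have "m < p" using \<open>i < p * p\<close> by simp
      then have "m \<le> p - 1" by linarith
      then show ?thesis using m by simp
    qed
    ultimately show "coeff (cyclotomic_sq p) i = 0"
      using assms by (auto simp: coeff_cyclotomic_sq)
  qed
  show "p * (p - 1) \<le> degree (cyclotomic_sq p)"
    using assms by (intro le_degree) (simp add: coeff_cyclotomic_sq)
qed

lemma lead_coeff_cyclotomic_sq: "p > 0 \<Longrightarrow> lead_coeff (cyclotomic_sq p) = 1"
  by (simp add: degree_cyclotomic_sq coeff_cyclotomic_sq)

lemma poly_cyclotomic_sq_1: "poly (cyclotomic_sq p) 1 = int p"
  by (simp add: cyclotomic_sq_def poly_sum poly_monom)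

lemma cyclotomic_sq_shift_mult:
  "(cyclotomic_sq p \<circ>\<^sub>p [:1, 1:]) * ([:1, 1:] ^ p - 1) = [:1, 1:] ^ (p * p) - 1"
proof (rule poly_ext)
  fix x :: int
  have "poly (cyclotomic_sq p \<circ>\<^sub>p [:1, 1:]) x = (\<Sum>t<p. ((1 + x) ^ p) ^ t)"
    by (simp add: cyclotomic_sq_def poly_pcompose poly_sum poly_monom power_mult)
  moreover have "((1 + x) ^ p) ^ p - 1 = ((1 + x) ^ p - 1) * (\<Sum>t<p. ((1 + x) ^ p) ^ t)"
    by (rule power_diff_1_eq)
  ultimately show "poly ((cyclotomic_sq p \<circ>\<^sub>p [:1, 1:]) * ([:1, 1:] ^ p - 1)) x
      = poly ([:1, 1:] ^ (p * p) - 1) x"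
    by (simp add: power_mult)
qed

lemma cyclotomic_sq_shift_cong:
  assumes p: "prime p"
  shows "[:int p:] dvd cyclotomic_sq p \<circ>\<^sub>p [:1, 1:] - monom 1 (p * (p - 1))"
proof -
  define X :: "int poly" where "X = monom 1 1"
  define \<Psi> where "\<Psi> = cyclotomic_sq p \<circ>\<^sub>p [:1, 1:]"
  have p0: "p > 0" using p prime_gt_0_nat by blast
  have X1: "[:1, 1:] = X + 1"
    by (simp add: X_def monom_altdef one_pCons)
  have D1: "[:int p:] dvd (X + 1) ^ p - (X ^ p + 1)"
    using p by (rule prime_dvd_binomial_power)
  have "[:int p:] dvd ((X + 1) ^ p) ^ p - (X ^ p + 1) ^ p"
    using D1 by (rule dvd_power_diff)
  moreover have "[:int p:] dvd (X ^ p + 1) ^ p - ((X ^ p) ^ p + 1)"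
    using p by (rule prime_dvd_binomial_power)
  moreover have "(X + 1) ^ (p * p) - (X ^ (p * p) + 1)
      = (((X + 1) ^ p) ^ p - (X ^ p + 1) ^ p) + ((X ^ p + 1) ^ p - ((X ^ p) ^ p + 1))"
    by (simp add: power_mult)
  ultimately have D2: "[:int p:] dvd (X + 1) ^ (p * p) - (X ^ (p * p) + 1)"
    by (metis dvd_add)
  have "X ^ p * (\<Psi> - monom 1 (p * (p - 1)))
      = ((X + 1) ^ (p * p) - (X ^ (p * p) + 1)) - \<Psi> * ((X + 1) ^ p - (X ^ p + 1))"
  proof -
    have "p + p * (p - 1) = p * p" using p0 by (cases p) auto
    then have "X ^ p * monom 1 (p * (p - 1)) = X ^ (p * p)"
      by (simp add: X_def monom_power mult_monom)
    moreover have "\<Psi> * ((X + 1) ^ p - 1) = (X + 1) ^ (p * p) - 1"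
      using cyclotomic_sq_shift_mult[of p] by (simp add: \<Psi>_def X1)
    ultimately show ?thesis by (simp add: algebra_simps)
  qed
  then have "[:int p:] dvd X ^ p * (\<Psi> - monom 1 (p * (p - 1)))"
    using D1 D2 by simp
  then have "[:int p:] dvd monom 1 p * (\<Psi> - monom 1 (p * (p - 1)))"
    by (simp add: X_def monom_power)
  then show ?thesis
    unfolding \<Psi>_def by (rule const_poly_dvd_monom_mult_cancel)
qed

lemma irreducible_cyclotomic_sq_shift:
  assumes p: "prime p"
  shows "irreducible (cyclotomic_sq p \<circ>\<^sub>p [:1, 1:])" (is "irreducible ?\<Psi>")
proof (rule eisenstein_irreducible)
  have p1: "p > 1" using p prime_gt_1_nat by blast
  have deg: "degree ?\<Psi> = p * (p - 1)"
    using p1 by (simp add: degree_pcompose degree_cyclotomic_sq)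
  show "prime (int p)" using p by simp
  show "lead_coeff ?\<Psi> = 1"
    using p1 lead_coeff_cyclotomic_sq[of p] by (simp add: lead_coeff_comp)
  show "degree ?\<Psi> > 0" using p1 deg by simp
  show "int p dvd coeff ?\<Psi> k" if "k < degree ?\<Psi>" for k
  proof -
    have "int p dvd coeff (?\<Psi> - monom 1 (p * (p - 1))) k"
      using cyclotomic_sq_shift_cong[OF p] unfolding const_poly_dvd_iff by blast
    then show ?thesis using that deg by (simp add: coeff_monom)
  qed
  have "coeff ?\<Psi> 0 = int p"
    by (simp add: poly_0_coeff_0[symmetric] poly_pcompose poly_cyclotomic_sq_1)
  moreover have "\<not> int p ^ 2 dvd int p"
    using p1 by (auto simp: power2_eq_square dest: zdvd_imp_le)
  ultimately show "\<not> int p ^ 2 dvd coeff ?\<Psi> 0" by simp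
qed

lemma irreducible_cyclotomic_sq:
  assumes p: "prime p"
  shows "irreducible (cyclotomic_sq p)"
proof -
  have p1: "p > 1" using p prime_gt_1_nat by blast
  define \<Psi> where "\<Psi> = cyclotomic_sq p \<circ>\<^sub>p [:1, 1:]"
  have "irreducible \<Psi>" unfolding \<Psi>_def using p by (rule irreducible_cyclotomic_sq_shift)
  show ?thesis
  proof (rule irreducibleI)
    have "degree (cyclotomic_sq p) > 0" using p1 by (simp add: degree_cyclotomic_sq)
    then show "cyclotomic_sq p \<noteq> 0" and "\<not> cyclotomic_sq p dvd 1"
      by (auto simp: is_unit_poly_iff)
  next
    fix a b assume ab: "cyclotomic_sq p = a * b"
    have unit_degree: "degree q = 0" if unit: "q \<circ>\<^sub>p [:1, 1:] dvd 1" for q :: "int poly"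
    proof -
      have "degree (q \<circ>\<^sub>p [:1, 1:]) = 0" using unit by (auto simp: is_unit_poly_iff)
      then show ?thesis by (simp add: degree_pcompose)
    qed
    have "\<Psi> = (a \<circ>\<^sub>p [:1, 1:]) * (b \<circ>\<^sub>p [:1, 1:])"
      using ab by (simp add: \<Psi>_def pcompose_mult)
    then have "a \<circ>\<^sub>p [:1, 1:] dvd 1 \<or> b \<circ>\<^sub>p [:1, 1:] dvd 1"
      using irreducibleD[OF \<open>irreducible \<Psi>\<close>] by blast
    then have "degree a = 0 \<or> degree b = 0"
      using unit_degree by (elim disjE) simp_all
    moreover have "lead_coeff (a * b) = 1"
      using ab p1 lead_coeff_cyclotomic_sq[of p] by simp
    ultimately show "a dvd 1 \<or> b dvd 1"
      using monic_factor_degree_0_unit by (metis mult.commute)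
  qed
qed

lemma map_poly_of_int_add:
  "map_poly (of_int :: int \<Rightarrow> 'a::comm_ring_1) (f + g) = map_poly of_int f + map_poly of_int g"
  by (rule poly_eqI) (simp add: coeff_map_poly)

lemma map_poly_of_int_mult:
  "map_poly (of_int :: int \<Rightarrow> 'a::comm_ring_1) (f * g) = map_poly of_int f * map_poly of_int g"
  by (rule poly_eqI) (simp add: coeff_map_poly coeff_mult)

lemma irreducible_root_degree_le:
  fixes f m :: "int poly" and z :: "'a::field_char_0"
  assumes f: "irreducible f" "poly (map_poly of_int f) z = 0"
    and m: "m \<noteq> 0" "poly (map_poly of_int m) z = 0"
  shows "degree f \<le> degree m"
  using m
proof (induction "degree m" arbitrary: m rule: less_induct)
  case less
  obtain q r where qr: "pseudo_divmod f m = (q, r)" by (cases "pseudo_divmod f m")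
  define c where "c = lead_coeff m ^ (Suc (degree f) - degree m)"
  have "c \<noteq> 0" using less.prems by (simp add: c_def)
  have eq: "smult c f = m * q + r"
    unfolding c_def by (rule pseudo_divmod(1)[OF less.prems(1) qr])
  have "poly (map_poly of_int (smult c f)) z = (0 :: 'a)"
    using f(2) by (simp add: map_poly_smult)
  then have r: "poly (map_poly of_int r) z = (0 :: 'a)"
    using less.prems(2) by (simp add: eq map_poly_of_int_add map_poly_of_int_mult)
  show ?case
  proof (cases "r = 0")
    case False
    then have "degree r < degree m" using pseudo_divmod(2)[OF less.prems(1) qr] by simp
    with False r less.hyps show ?thesis by fastforce
  next
    case True
    have "f dvd m * q" using eq True by (metis add_0_right dvd_smult dvd_refl)
    then have "f dvd m \<or> f dvd q"
      using irreducible_imp_prime_elem[OF f(1)] by (simp add: prime_elem_dvd_mult_iff)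
    then show ?thesis
    proof
      assume "f dvd m"
      then show ?thesis using less.prems(1) by (rule dvd_imp_degree_le)
    next
      \<comment> \<open>then \<open>m\<close> divides the nonzero constant \<open>c\<close>, so it has no roots\<close>
      assume "f dvd q"
      then obtain q' where "q = f * q'" by (elim dvdE)
      have "f \<noteq> 0" using f(1) by auto
      have "f * [:c:] = f * (m * q')"
        using eq True \<open>q = f * q'\<close> by (simp add: ac_simps)
      then have cm: "[:c:] = m * q'" using mult_left_cancel[OF \<open>f \<noteq> 0\<close>] by blast
      then have "q' \<noteq> 0" using \<open>c \<noteq> 0\<close> by auto
      then have "degree (m * q') = degree m + degree q'"
        using less.prems(1) by (simp add: degree_mult_eq)
      then have "degree m = 0" by (simp flip: cm)
      then obtain a where "m = [:a:]" by (elim degree_eq_zeroE)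
      then show ?thesis using less.prems by (simp add: map_poly_pCons)
    qed
  qed
qed

lemma monic_irreducible_root_dvd:
  fixes f m :: "int poly" and z :: "'a::field_char_0"
  assumes f: "irreducible f" "lead_coeff f = 1" "poly (map_poly of_int f) z = 0"
    and m: "poly (map_poly of_int m) z = 0"
  shows "f dvd m"
proof -
  have "f \<noteq> 0" using f(2) by auto
  obtain q r where qr: "pseudo_divmod m f = (q, r)" by (cases "pseudo_divmod m f")
  have eq: "m = f * q + r"
    using pseudo_divmod(1)[OF \<open>f \<noteq> 0\<close> qr] f(2) by simp
  have "poly (map_poly of_int r) z = (0 :: 'a)"
    using f(3) m by (simp add: eq map_poly_of_int_add map_poly_of_int_mult)
  then have "r = 0"
    using pseudo_divmod(2)[OF \<open>f \<noteq> 0\<close> qr] irreducible_root_degree_le[OF f(1,3)] by fastforce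
  then show ?thesis using eq by simp
qed

lemma coeff_sum_monom:
  assumes "finite A"
  shows "coeff (\<Sum>a\<in>A. monom 1 (e a) :: int poly) r = int (card {a \<in> A. e a = r})"
  using assms by (simp add: coeff_sum coeff_monom sum.If_cases Int_def)

lemma coeff_cyclotomic_sq_mult_low:
  assumes "s < p"
  shows "coeff (cyclotomic_sq p * q) s = coeff q s"
proof -
  have "coeff (cyclotomic_sq p) i * coeff q (s - i) = (if i = 0 then coeff q s else 0)"
    if "i \<le> s" for i
    using that assms by (auto simp: coeff_cyclotomic_sq dest: dvd_imp_le)
  then show ?thesis by (simp add: coeff_mult)
qed

lemma nonneg_int_sum_eq_1:
  fixes w :: "'a \<Rightarrow> int"
  assumes "finite K" "\<And>k. k \<in> K \<Longrightarrow> w k \<ge> 0" "sum w K = 1"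
  shows "\<exists>k\<in>K. \<forall>j\<in>K. w j = (if j = k then 1 else 0)"
proof -
  obtain k where k: "k \<in> K" "w k \<noteq> 0" using assms(3) by (metis sum.neutral zero_neq_one)
  have "w k + w j \<le> 1" if "j \<in> K" "j \<noteq> k" for j
  proof -
    have "sum w {k, j} \<le> sum w K"
      using that k assms by (intro sum_mono2) auto
    then show ?thesis using that assms(3) by simp
  qed
  moreover have "w k \<le> 1"
    using k assms member_le_sum[of k K w] by simp
  then have "w k = 1" using k(2) assms(2)[OF k(1)] by linarith
  ultimately have "w j = 0" if "j \<in> K" "j \<noteq> k" for j
    using that assms(2)[OF that(1)] by fastforce
  then show ?thesis using k(1) \<open>w k = 1\<close> by auto
qed

lemma card_fibres_eq_imp_bij:
  assumes "finite A" "finite B" "inj_on f B"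
    and fibres: "\<And>r. card {a \<in> A. e a = r} = card {t \<in> B. f t = r}"
  shows "bij_betw e A (f ` B)"
proof -
  have "card {t \<in> B. f t = r} \<le> 1" for r
    using assms(2,3) by (auto simp: card_le_Suc0_iff_eq inj_on_def)
  then have "card {a \<in> A. e a = r} \<le> 1" for r
    using fibres by simp
  then have "inj_on e A"
    using assms(1) by (fastforce simp: inj_on_def card_le_Suc0_iff_eq)
  moreover have "r \<in> e ` A \<longleftrightarrow> r \<in> f ` B" for r
  proof -
    have "r \<in> e ` A \<longleftrightarrow> card {a \<in> A. e a = r} > 0"
      using assms(1) by (auto simp: card_gt_0_iff)
    moreover have "r \<in> f ` B \<longleftrightarrow> card {t \<in> B. f t = r} > 0"
      using assms(2) by (auto simp: card_gt_0_iff)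
    ultimately show ?thesis using fibres by simp
  qed
  ultimately show ?thesis by (auto simp: bij_betw_def)
qed

lemma cyclotomic_sq_times_monom:
  "cyclotomic_sq p * monom 1 s = (\<Sum>t<p. monom 1 (s + p * t))"
  by (simp add: cyclotomic_sq_def sum_distrib_right mult_monom add.commute)

lemma cyclotomic_sq_cofactor_monom:
  fixes e :: "'a \<Rightarrow> nat"
  assumes p: "p > 0" and A: "finite A" "card A = p"
    and e: "\<And>a. a \<in> A \<Longrightarrow> e a < p ^ 2"
    and dvd: "cyclotomic_sq p dvd (\<Sum>a\<in>A. monom 1 (e a))"
  shows "\<exists>s<p. (\<Sum>a\<in>A. monom 1 (e a)) = cyclotomic_sq p * monom 1 s"
proof -
  define P :: "int poly" where "P = (\<Sum>a\<in>A. monom 1 (e a))"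
  obtain q where Pq: "P = cyclotomic_sq p * q" using dvd unfolding P_def by (elim dvdE)
  have coeff_P: "coeff P r = int (card {a \<in> A. e a = r})" for r
    unfolding P_def using A(1) by (rule coeff_sum_monom)
  have P1: "poly P 1 = int p" using A by (simp add: P_def poly_sum poly_monom)
  then have q1: "poly q 1 = 1" using p by (simp add: Pq poly_cyclotomic_sq_1)
  have "P \<noteq> 0" using P1 p by auto
  have "degree P < p * p"
  proof -
    have "coeff P r = 0" if "r \<ge> p * p" for r
    proof -
      have "{a \<in> A. e a = r} = {}" using that e by (force simp: power2_eq_square)
      then show ?thesis by (simp only: coeff_P card.empty of_nat_0)
    qed
    then show ?thesis using \<open>P \<noteq> 0\<close> by (metis leading_coeff_0_iff not_less)
  qed
  moreover have "degree P = p * (p - 1) + degree q"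
    using \<open>P \<noteq> 0\<close> p by (simp add: Pq degree_mult_eq degree_cyclotomic_sq)
  moreover have "p * p = p * (p - 1) + p" using p by (simp add: algebra_simps)
  ultimately have deg_q: "degree q < p" by linarith
  \<comment> \<open>the coefficients of \<open>q\<close> are multiplicities of exponents, hence nonnegative, and they sum to \<open>q(1) = 1\<close>\<close>
  have "coeff q s \<ge> 0" if "s < p" for s
    using coeff_cyclotomic_sq_mult_low[OF that, of q] by (simp add: Pq[symmetric] coeff_P)
  moreover have "(\<Sum>s<p. coeff q s) = 1"
    using q1 deg_q by (simp add: poly_altdef lessThan_Suc_atMost[symmetric]
        sum.mono_neutral_right[of "{..<p}" "{..<Suc (degree q)}"] coeff_eq_0)
  ultimately obtain s where s: "s < p" "\<And>j. j < p \<Longrightarrow> coeff q j = (if j = s then 1 else 0)"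
    using nonneg_int_sum_eq_1[of "{..<p}" "coeff q"] by auto
  have "coeff q j = coeff (monom 1 s) j" for j
  proof (cases "j < p")
    case True
    then show ?thesis using s by (simp add: coeff_monom)
  next
    case False
    then show ?thesis using deg_q s(1) by (simp add: coeff_monom coeff_eq_0)
  qed
  then have "q = monom 1 s" by (rule poly_eqI)
  then show ?thesis using s(1) Pq unfolding P_def by blast
qed

lemma exponents_coset_if_cyclotomic_sq_dvd:
  fixes e :: "'a \<Rightarrow> nat"
  assumes p: "p > 0" and A: "finite A" "card A = p"
    and e: "\<And>a. a \<in> A \<Longrightarrow> e a < p ^ 2"
    and dvd: "cyclotomic_sq p dvd (\<Sum>a\<in>A. monom 1 (e a))"
  obtains s \<tau> where "s < p" "bij_betw \<tau> A {..<p}" "\<And>a. a \<in> A \<Longrightarrow> e a = s + p * \<tau> a"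
proof -
  obtain s where s: "s < p" "(\<Sum>a\<in>A. monom 1 (e a)) = (\<Sum>t<p. monom 1 (s + p * t) :: int poly)"
    using cyclotomic_sq_cofactor_monom[OF assms]
    by (auto simp: cyclotomic_sq_times_monom)
  have "card {a \<in> A. e a = r} = card {t \<in> {..<p}. s + p * t = r}" for r
    using arg_cong[OF s(2), of "\<lambda>P. coeff P r"] A(1) by (simp add: coeff_sum_monom)
  then have bij: "bij_betw e A ((\<lambda>t. s + p * t) ` {..<p})"
    using A p by (intro card_fibres_eq_imp_bij) (auto simp: inj_on_def)
  have "inj_on (\<lambda>t. s + p * t) {..<p}" using p by (auto simp: inj_on_def)
  then have "bij_betw (inv_into {..<p} (\<lambda>t. s + p * t) \<circ> e) A {..<p}"
    by (intro bij_betw_trans[OF bij] bij_betw_inv_into inj_on_imp_bij_betw)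
  moreover have "e a = s + p * (inv_into {..<p} (\<lambda>t. s + p * t) \<circ> e) a" if "a \<in> A" for a
  proof -
    have "e a \<in> (\<lambda>t. s + p * t) ` {..<p}" using bij that by (auto simp: bij_betw_def)
    from f_inv_into_f[OF this] show ?thesis by simp
  qed
  ultimately show ?thesis using that s(1) by blast
qed

lemma mult_cnj_norm_1: "norm w = 1 \<Longrightarrow> w * cnj w = 1"
  by (metis complex_norm_square of_real_1 power_one)

definition unit_root :: "nat \<Rightarrow> complex" where
  "unit_root n = exp (2 * of_real pi * \<i> / of_nat n)"

lemma unit_root_pow: "unit_root n ^ k = exp (2 * of_real pi * \<i> * of_nat k / of_nat n)"
  unfolding unit_root_def exp_of_nat_mult[symmetric] by (simp add: field_simps)

lemma unit_root_pow_eq_iff: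
  "n > 0 \<Longrightarrow> unit_root n ^ i = unit_root n ^ j \<longleftrightarrow> [i = j] (mod n)"
  by (simp add: unit_root_pow complex_root_unity_eq cong_def)

lemma unit_root_pow_eq_1_iff: "n > 0 \<Longrightarrow> unit_root n ^ k = 1 \<longleftrightarrow> n dvd k"
  using unit_root_pow_eq_iff[of n k 0] by (simp add: cong_0_iff)

lemma norm_unit_root_pow [simp]: "norm (unit_root n ^ k) = 1"
  by (simp add: unit_root_pow norm_exp_eq_Re)

lemma unit_root_mult_pow: "m > 0 \<Longrightarrow> unit_root (m * n) ^ (m * k) = unit_root n ^ k"
  by (simp add: unit_root_pow field_simps)

lemma sum_unit_root_pow_cnj:
  assumes "j < n" "j' < n"
  shows "(\<Sum>k<n. (unit_root n ^ j * cnj (unit_root n ^ j')) ^ k) = (if j = j' then of_nat n else 0)"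
proof (cases "j = j'")
  case True
  then show ?thesis using mult_cnj_norm_1[OF norm_unit_root_pow[of n j]] by simp
next
  case False
  define z where "z = unit_root n ^ j * cnj (unit_root n ^ j')"
  have n: "n > 0" using assms by simp
  have "z \<noteq> 1"
  proof
    assume "z = 1"
    then have "unit_root n ^ j = unit_root n ^ j'"
      by (metis z_def mult_cnj_norm_1 norm_unit_root_pow mult.assoc mult.commute mult_1_right)
    then show False
      using False assms n by (auto simp: unit_root_pow_eq_iff dest: cong_less_modulus_unique_nat)
  qed
  have "z ^ n = (unit_root n ^ n) ^ j * cnj ((unit_root n ^ n) ^ j')"
    by (simp add: z_def power_mult_distrib ac_simps flip: power_mult)
  moreover have "unit_root n ^ n = 1" using n by (simp add: unit_root_pow_eq_1_iff)
  ultimately have "z ^ n = 1" by simp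
  then have "(\<Sum>k<n. z ^ k) = 0" using \<open>z \<noteq> 1\<close> by (simp add: geometric_sum)
  then show ?thesis using False unfolding z_def by simp
qed

lemma cong_mult_mod_sq: "[p * (m mod p) = p * m] (mod p ^ 2)"
  by (simp only: power2_eq_square mult_mod_right cong_mod_left cong_refl)

lemma chi_eq_unit_root:
  assumes "p > 0"
  shows "chi p b a = unit_root (p ^ 2) ^ (fst a * fst b + p * snd a * snd b)"
proof -
  have "real (fst a) * real (fst b) / real (p ^ 2) + real (snd a) * real (snd b) / real p
      = real (fst a * fst b + p * snd a * snd b) / real (p ^ 2)"
    using assms by (simp add: field_simps power2_eq_square)
  then have "chi p b a
      = exp (2 * of_real pi * \<i> * of_real (real (fst a * fst b + p * snd a * snd b) / real (p ^ 2)))"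
    unfolding chi_def by simp
  also have "\<dots> = unit_root (p ^ 2) ^ (fst a * fst b + p * snd a * snd b)"
    by (simp only: unit_root_pow of_real_divide of_real_of_nat_eq mult.assoc times_divide_eq_right)
  finally show ?thesis .
qed

definition pairing :: "nat \<Rightarrow> nat \<times> nat \<Rightarrow> nat \<times> nat \<Rightarrow> nat" where
  "pairing p b a = (fst a * fst b + p * snd a * snd b) mod p ^ 2"

lemma pairing_less: "p > 0 \<Longrightarrow> pairing p b a < p ^ 2"
  by (simp add: pairing_def)

lemma chi_pairing: "p > 0 \<Longrightarrow> chi p b a = unit_root (p ^ 2) ^ pairing p b a"
  by (simp add: chi_eq_unit_root pairing_def unit_root_pow_eq_iff)

lemma norm_chi: "p > 0 \<Longrightarrow> norm (chi p b a) = 1"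
  by (simp add: chi_pairing)

lemma pairing_addG: "pairing p b (addG p x y) = (pairing p b x + pairing p b y) mod p ^ 2"
proof -
  have "[(fst x + fst y) mod p ^ 2 * fst b = (fst x + fst y) * fst b] (mod p ^ 2)"
    by (simp add: cong_scalar_right)
  moreover have "[p * ((snd x + snd y) mod p) * snd b = p * (snd x + snd y) * snd b] (mod p ^ 2)"
    by (rule cong_scalar_right[OF cong_mult_mod_sq])
  ultimately have "[fst (addG p x y) * fst b + p * snd (addG p x y) * snd b
      = (fst x + fst y) * fst b + p * (snd x + snd y) * snd b] (mod p ^ 2)"
    unfolding addG_def fst_conv snd_conv by (rule cong_add)
  also have "(fst x + fst y) * fst b + p * (snd x + snd y) * snd b
      = (fst x * fst b + p * snd x * snd b) + (fst y * fst b + p * snd y * snd b)"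
    by (simp add: algebra_simps)
  finally show ?thesis by (simp add: pairing_def cong_def mod_add_eq)
qed

definition scaleG :: "nat \<Rightarrow> nat \<Rightarrow> nat \<times> nat \<Rightarrow> nat \<times> nat" where
  "scaleG p k b = ((k * fst b) mod p ^ 2, (k * snd b) mod p)"

lemma scaleG_in_Gset: "p > 0 \<Longrightarrow> scaleG p k b \<in> Gset p"
  by (simp add: scaleG_def Gset_def)

lemma chi_scaleG:
  assumes "p > 0"
  shows "chi p (scaleG p k b) a = chi p b a ^ k"
proof -
  have "[fst a * ((k * fst b) mod p ^ 2) = fst a * (k * fst b)] (mod p ^ 2)"
    by (simp add: cong_scalar_left)
  moreover have "[snd a * (p * ((k * snd b) mod p)) = snd a * (p * (k * snd b))] (mod p ^ 2)"
    by (rule cong_scalar_left[OF cong_mult_mod_sq])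
  ultimately have "[fst a * ((k * fst b) mod p ^ 2) + snd a * (p * ((k * snd b) mod p))
      = fst a * (k * fst b) + snd a * (p * (k * snd b))] (mod p ^ 2)"
    by (rule cong_add)
  also have "fst a * (k * fst b) + snd a * (p * (k * snd b))
      = (fst a * fst b + p * snd a * snd b) * k"
    by (simp add: algebra_simps)
  finally have "[fst a * ((k * fst b) mod p ^ 2) + p * snd a * ((k * snd b) mod p)
      = (fst a * fst b + p * snd a * snd b) * k] (mod p ^ 2)"
    by (simp only: mult.assoc mult.left_commute[of p])
  then show ?thesis
    using assms by (simp add: chi_eq_unit_root scaleG_def unit_root_pow_eq_iff flip: power_mult)
qed

lemma poly_map_poly_of_int_sum_monom:
  "poly (map_poly of_int (\<Sum>a\<in>A. monom 1 (e a) :: int poly)) (z :: 'a::comm_ring_1) = (\<Sum>a\<in>A. z ^ e a)"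
  by (induction A rule: infinite_finite_induct)
    (simp_all add: map_poly_of_int_add map_poly_monom poly_monom)

lemma poly_cyclotomic_sq_unit_root:
  assumes "p > 1"
  shows "poly (map_poly of_int (cyclotomic_sq p)) (unit_root (p ^ 2)) = 0"
proof -
  have "poly (map_poly of_int (cyclotomic_sq p)) (unit_root (p ^ 2)) = (\<Sum>t<p. unit_root p ^ t)"
    using assms by (simp add: cyclotomic_sq_def poly_map_poly_of_int_sum_monom power2_eq_square
        unit_root_mult_pow)
  also have "\<dots> = 0"
    using sum_unit_root_pow_cnj[of 1 p 0] assms by simp
  finally show ?thesis .
qed

lemma pairing_coset_if_in_zeroset:
  assumes p: "prime p" and A: "A \<subseteq> Gset p" "card A = p" and b: "b \<in> zeroset p A"
  obtains s \<tau> where "s < p" "bij_betw \<tau> A {..<p}" "\<And>a. a \<in> A \<Longrightarrow> pairing p b a = s + p * \<tau> a"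
proof -
  have p1: "p > 1" using p prime_gt_1_nat by blast
  have "finite A" using A(1) finite_subset by (auto simp: Gset_def)
  have "hat1 p A b = 0" using b by (simp add: zeroset_def)
  then have "(\<Sum>a\<in>A. chi p b a) = 0" by (simp add: hat1_def flip: cnj_sum)
  then have "poly (map_poly of_int (\<Sum>a\<in>A. monom 1 (pairing p b a))) (unit_root (p ^ 2)) = 0"
    using p1 by (simp add: poly_map_poly_of_int_sum_monom chi_pairing)
  moreover have "lead_coeff (cyclotomic_sq p) = 1" using p1 by (simp add: lead_coeff_cyclotomic_sq)
  ultimately have "cyclotomic_sq p dvd (\<Sum>a\<in>A. monom 1 (pairing p b a))"
    using monic_irreducible_root_dvd irreducible_cyclotomic_sq[OF p]
      poly_cyclotomic_sq_unit_root[OF p1] by blast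
  moreover have "pairing p b a < p ^ 2" for a using p1 by (simp add: pairing_less)
  ultimately show ?thesis
    using exponents_coset_if_cyclotomic_sq_dvd[OF _ \<open>finite A\<close> A(2)] p1 that by blast
qed

lemma addG_left_cancel:
  assumes "t \<in> Gset p" "t' \<in> Gset p" "addG p a t = addG p a t'"
  shows "t = t'"
proof -
  have "[fst a + fst t = fst a + fst t'] (mod p ^ 2)" "[snd a + snd t = snd a + snd t'] (mod p)"
    using assms(3) by (simp_all add: addG_def cong_def)
  then have "fst t = fst t'" "snd t = snd t'"
    using assms(1,2) by (auto simp: Gset_def cong_add_lcancel_nat dest: cong_less_modulus_unique_nat)
  then show ?thesis by (simp add: prod_eq_iff)
qed

lemma addG_solvable:
  assumes "a \<in> Gset p" "g \<in> Gset p"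
  shows "\<exists>t \<in> Gset p. addG p a t = g"
proof
  define t where "t = ((fst g + p ^ 2 - fst a) mod p ^ 2, (snd g + p - snd a) mod p)"
  have "p > 0" using assms by (auto simp: Gset_def)
  then show "t \<in> Gset p" by (simp add: t_def Gset_def)
  have "[fst a + (fst g + p ^ 2 - fst a) = fst g] (mod p ^ 2)"
    "[snd a + (snd g + p - snd a) = snd g] (mod p)"
    using assms by (auto simp: Gset_def cong_def)
  then show "addG p a t = g"
    using assms by (auto simp: addG_def t_def cong_def mod_add_right_eq Gset_def prod_eq_iff)
qed

lemma expansion_if_column_orthogonal:
  fixes E :: "'k \<Rightarrow> 'a \<Rightarrow> complex"
  assumes "finite K" "finite A" "n \<noteq> 0"
    and orth: "\<And>a a'. a \<in> A \<Longrightarrow> a' \<in> A \<Longrightarrow>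
      (\<Sum>k\<in>K. E k a * cnj (E k a')) = (if a = a' then of_nat n else 0)"
  shows "\<exists>c. \<forall>a\<in>A. f a = (\<Sum>k\<in>K. c k * E k a)"
proof (intro exI ballI)
  fix a assume a: "a \<in> A"
  have "(\<Sum>k\<in>K. ((\<Sum>a'\<in>A. f a' * cnj (E k a')) / of_nat n) * E k a)
      = (\<Sum>a'\<in>A. f a' * (\<Sum>k\<in>K. E k a * cnj (E k a'))) / of_nat n"
    by (simp add: sum_divide_distrib sum_distrib_left sum_distrib_right sum.swap[of _ K] mult_ac)
  also have "\<dots> = f a"
    using a assms(2,3) by (simp add: orth if_distrib sum.delta' cong: if_cong)
  finally show "f a = (\<Sum>k\<in>K. ((\<Sum>a'\<in>A. f a' * cnj (E k a')) / of_nat n) * E k a)" ..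
qed

context
  fixes p :: nat and A :: "(nat \<times> nat) set" and b :: "nat \<times> nat"
    and s :: nat and \<tau> :: "nat \<times> nat \<Rightarrow> nat"
  assumes A: "A \<subseteq> Gset p" and s: "s < p" and \<tau>: "bij_betw \<tau> A {..<p}"
    and coset: "\<And>a. a \<in> A \<Longrightarrow> pairing p b a = s + p * \<tau> a"
begin

private lemma p_pos: "p > 0"
  using s by simp

private lemma pairing_add_cong:
  "[pairing p b a + pairing p b t = pairing p b (addG p a t)] (mod p ^ 2)"
  by (simp add: pairing_addG cong_def)

lemma pairing_coset_cover:
  assumes g: "g \<in> Gset p"
  shows "\<exists>a\<in>A. \<exists>t\<in>Gset p. pairing p b t < p \<and> addG p a t = g"
proof -
  \<comment> \<open>\<open>d = pairing g - s\<close> modulo \<open>p\<^sup>2\<close>; the digit \<open>d div p\<close> selects \<open>a\<close>, the digit \<open>d mod p\<close> is left for \<open>t\<close>\<close>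
  define d where "d = (pairing p b g + p ^ 2 - s) mod p ^ 2"
  have "d div p < p" using p_pos by (simp add: d_def power2_eq_square less_mult_imp_div_less)
  then obtain a where a: "a \<in> A" "\<tau> a = d div p"
    using \<tau> by (metis bij_betw_def imageE lessThan_iff)
  obtain t where t: "t \<in> Gset p" "addG p a t = g"
    using addG_solvable[OF _ g] a A by blast
  have "[s + p * (d div p) + pairing p b t = pairing p b g] (mod p ^ 2)"
    using pairing_add_cong[of a t] coset[OF a(1)] a(2) t(2) by simp
  moreover have "[pairing p b g = s + d] (mod p ^ 2)"
  proof -
    have "s \<le> p ^ 2" using s by (simp add: power2_eq_square) (meson le_square less_imp_le_nat order_trans)
    then have "s + (pairing p b g + p ^ 2 - s) = pairing p b g + p ^ 2" by simp
    then show ?thesis by (simp add: d_def cong_def mod_add_right_eq)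
  qed
  moreover have "s + d = s + p * (d div p) + d mod p" by simp
  ultimately have "[pairing p b t = d mod p] (mod p ^ 2)"
    by (metis (no_types) cong_trans cong_add_lcancel_nat add.assoc)
  moreover have "d mod p < p ^ 2"
    using p_pos by (simp add: power2_eq_square) (meson le_square less_le_trans mod_less_divisor)
  ultimately have "pairing p b t = d mod p"
    using pairing_less[OF p_pos] cong_less_modulus_unique_nat by blast
  then have "pairing p b t < p" using p_pos by simp
  then show ?thesis using a(1) t by blast
qed

lemma pairing_coset_unique:
  assumes "a \<in> A" "a' \<in> A" "t \<in> Gset p" "t' \<in> Gset p" "pairing p b t < p" "pairing p b t' < p"
    and eq: "addG p a t = addG p a' t'"
  shows "a = a' \<and> t = t'"
proof -
  have mod_p2: "[s + p * \<tau> a + pairing p b t = s + p * \<tau> a' + pairing p b t'] (mod p ^ 2)"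
    using pairing_add_cong[of a t] pairing_add_cong[of a' t'] eq assms(1,2) coset
    by (metis cong_sym cong_trans)
  have drop: "[s + p * k + x = s + x] (mod p)" for k x
  proof -
    have "s + p * k + x = (s + x) + p * k" by simp
    then have "(s + p * k + x) mod p = ((s + x) + p * k) mod p" by (rule arg_cong)
    also have "\<dots> = (s + x) mod p" by (rule mod_mult_self2)
    finally show ?thesis unfolding cong_def .
  qed
  have "[s + p * \<tau> a + pairing p b t = s + p * \<tau> a' + pairing p b t'] (mod p)"
    using mod_p2 by (rule cong_dvd_modulus_nat) simp
  then have "[s + pairing p b t = s + pairing p b t'] (mod p)"
    using drop[of "\<tau> a" "pairing p b t"] drop[of "\<tau> a'" "pairing p b t'"]
    by (metis cong_sym cong_trans)
  then have "pairing p b t = pairing p b t'"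
    using assms(5,6) by (auto simp: cong_add_lcancel_nat dest: cong_less_modulus_unique_nat)
  then have "[p * \<tau> a = p * \<tau> a'] (mod p ^ 2)"
    using mod_p2 by (simp add: cong_add_rcancel_nat cong_add_lcancel_nat)
  moreover have "p * \<tau> a < p ^ 2" "p * \<tau> a' < p ^ 2"
    using \<tau> assms(1,2) p_pos by (auto simp: bij_betw_def power2_eq_square)
  ultimately have "\<tau> a = \<tau> a'" using p_pos by (auto dest: cong_less_modulus_unique_nat)
  then have "a = a'" using \<tau> assms(1,2) by (auto simp: bij_betw_def inj_on_def)
  then show ?thesis using assms(3,4) eq addG_left_cancel by blast
qed

lemma tile_if_pairing_coset: "tile p A"
  unfolding tile_def
proof (intro exI[of _ "{t \<in> Gset p. pairing p b t < p}"] conjI ballI)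
  fix g assume "g \<in> Gset p"
  then obtain a t where at: "a \<in> A" "t \<in> Gset p" "pairing p b t < p" "addG p a t = g"
    using pairing_coset_cover by blast
  show "\<exists>!x. x \<in> A \<times> {t \<in> Gset p. pairing p b t < p} \<and> addG p (fst x) (snd x) = g"
  proof (rule ex1I[of _ "(a, t)"])
    show "(a, t) \<in> A \<times> {t \<in> Gset p. pairing p b t < p} \<and> addG p (fst (a, t)) (snd (a, t)) = g"
      using at by simp
    fix x assume "x \<in> A \<times> {t \<in> Gset p. pairing p b t < p} \<and> addG p (fst x) (snd x) = g"
    then have "fst x = a \<and> snd x = t"
      using pairing_coset_unique[of "fst x" a "snd x" t] at by (simp add: mem_Times_iff)
    then show "x = (a, t)" by (simp add: prod_eq_iff)
  qed
qed auto

private lemma chi_coset: "a \<in> A \<Longrightarrow> chi p b a = unit_root (p ^ 2) ^ s * unit_root p ^ \<tau> a"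
  using p_pos coset by (simp add: chi_pairing power_add power2_eq_square unit_root_mult_pow)

lemma chi_pow_rows_orthogonal:
  assumes "k < p" "k' < p"
  shows "(\<Sum>a\<in>A. chi p b a ^ k * cnj (chi p b a ^ k')) = (if k = k' then of_nat p else 0)"
proof (cases "k = k'")
  case True
  have "chi p b a ^ k * cnj (chi p b a ^ k) = 1" for a
    using p_pos by (intro mult_cnj_norm_1) (simp add: norm_power norm_chi)
  then show ?thesis using True by (simp add: bij_betw_same_card[OF \<tau>])
next
  case False
  define \<omega> where "\<omega> = unit_root p"
  define \<zeta> where "\<zeta> = unit_root (p ^ 2) ^ s"
  have "(\<Sum>a\<in>A. chi p b a ^ k * cnj (chi p b a ^ k'))
      = \<zeta> ^ k * cnj \<zeta> ^ k' * (\<Sum>a\<in>A. (\<omega> ^ k * cnj (\<omega> ^ k')) ^ \<tau> a)"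
    by (simp add: \<omega>_def \<zeta>_def sum_distrib_left chi_coset power_mult_distrib mult_ac
        flip: power_mult cong: sum.cong)
  also have "(\<Sum>a\<in>A. (\<omega> ^ k * cnj (\<omega> ^ k')) ^ \<tau> a) = (\<Sum>t<p. (\<omega> ^ k * cnj (\<omega> ^ k')) ^ t)"
    using sum.reindex_bij_betw[OF \<tau>] by blast
  also have "\<dots> = 0"
    using sum_unit_root_pow_cnj[OF assms] False by (simp add: \<omega>_def)
  finally show ?thesis using False by simp
qed

lemma chi_pow_columns_orthogonal:
  assumes "a \<in> A" "a' \<in> A"
  shows "(\<Sum>k<p. chi p b a ^ k * cnj (chi p b a' ^ k)) = (if a = a' then of_nat p else 0)"
proof -
  have "(\<Sum>k<p. chi p b a ^ k * cnj (chi p b a' ^ k)) = (\<Sum>k<p. (chi p b a * cnj (chi p b a')) ^ k)"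
    by (simp add: power_mult_distrib)
  also have "chi p b a * cnj (chi p b a') = unit_root p ^ \<tau> a * cnj (unit_root p ^ \<tau> a')"
    using assms mult_cnj_norm_1[OF norm_unit_root_pow[of "p ^ 2" s]]
    by (simp add: chi_coset mult_ac del: complex_cnj_power)
  also have "(\<Sum>k<p. (unit_root p ^ \<tau> a * cnj (unit_root p ^ \<tau> a')) ^ k)
      = (if \<tau> a = \<tau> a' then of_nat p else 0)"
    using \<tau> assms by (intro sum_unit_root_pow_cnj) (auto simp: bij_betw_def)
  also have "\<tau> a = \<tau> a' \<longleftrightarrow> a = a'"
    using \<tau> assms by (auto simp: bij_betw_def inj_on_def)
  finally show ?thesis .
qed

lemma spectral_if_pairing_coset: "spectral p A"
proof -
  have "finite A" using A finite_subset by (auto simp: Gset_def)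
  define B where "B = (\<lambda>k. scaleG p k b) ` {..<p}"
  have inj: "inj_on (\<lambda>k. scaleG p k b) {..<p}"
  proof (rule inj_onI, rule ccontr)
    fix k k' assume "k \<in> {..<p}" "k' \<in> {..<p}" "scaleG p k b = scaleG p k' b" "k \<noteq> k'"
    then show False
      using chi_pow_rows_orthogonal[of k k'] chi_pow_rows_orthogonal[of k k] p_pos
      by (simp add: chi_scaleG[OF p_pos, symmetric])
  qed
  show ?thesis
    unfolding spectral_def
  proof (intro exI[of _ B] conjI ballI impI allI)
    show "B \<subseteq> Gset p" using p_pos by (auto simp: B_def scaleG_in_Gset)
  next
    fix x x' assume "x \<in> B" "x' \<in> B" "x \<noteq> x'"
    then show "(\<Sum>a\<in>A. chi p x a * cnj (chi p x' a)) = 0"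
      using chi_pow_rows_orthogonal by (auto simp: B_def chi_scaleG[OF p_pos])
  next
    fix f :: "nat \<times> nat \<Rightarrow> complex"
    have "(\<Sum>x\<in>B. chi p x a * cnj (chi p x a')) = (if a = a' then of_nat p else 0)"
      if "a \<in> A" "a' \<in> A" for a a'
      using chi_pow_columns_orthogonal[OF that]
      by (simp add: B_def sum.reindex[OF inj] chi_scaleG[OF p_pos])
    then show "\<exists>c. \<forall>a\<in>A. f a = (\<Sum>x\<in>B. c x * chi p x a)"
      using \<open>finite A\<close> p_pos by (intro expansion_if_column_orthogonal) (auto simp: B_def)
  qed
qed

end

theorem proposition5p3:
  fixes p :: nat and A :: "(nat \<times> nat) set"
  assumes "prime p"
    and "A \<subseteq> Gset p"
    and "card A = p"
    and "zeroset p A \<noteq> {}"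
  shows "tile p A \<and> spectral p A"
proof -
  obtain b where "b \<in> zeroset p A" using assms(4) by blast
  then obtain s \<tau> where "s < p" "bij_betw \<tau> A {..<p}" "\<And>a. a \<in> A \<Longrightarrow> pairing p b a = s + p * \<tau> a"
    using pairing_coset_if_in_zeroset[OF assms(1-3)] by blast
  then show ?thesis
    using tile_if_pairing_coset spectral_if_pairing_coset assms(2) by blast
qed

end
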